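(* Let $\lambda,\mu$ be partitions and $x$ an indeterminate, and put $$X_{\lambda\mu}(x):=\prod_{(i,j)\in[\mu]}(j-i-x)\prod_{(i,j)\in [\lambda]}\biggl((j-i-\mu_1+x)\prod_{1\le k\le\mu_1}\frac{j-i+\bar{\mu}_k-k+1+x}{j-i+\bar{\mu}_k-k+x}\biggr).$$ Then $X_{\lambda\mu}(x)=X_{\mu\lambda}(-x)$.
   Context: For a partition $\lambda$, $[\lambda]=\{(i,j): i\ge1,\ 1\le j\le\lambda_i\}$ is its diagram and $\bar\lambda$ is the conjugate partition ($\bar\lambda_k$ = number of $i$ with $\lambda_i\ge k$). *)

theory Defs
  imports "HOL-Computational_Algebra.Polynomial" "HOL-Computational_Algebra.Fraction_Field"
begin

definition is_partition :: "nat list \<Rightarrow> bool" where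
  "is_partition lam \<longleftrightarrow> sorted_wrt (\<ge>) lam \<and> 0 \<notin> set lam"

definition part :: "nat list \<Rightarrow> nat \<Rightarrow> nat" where
  "part lam i = (if 1 \<le> i \<and> i \<le> length lam then lam ! (i - 1) else 0)"

definition diagram :: "nat list \<Rightarrow> (nat \<times> nat) set" where
  "diagram lam = {(i, j). 1 \<le> i \<and> 1 \<le> j \<and> j \<le> part lam i}"

definition conj_part :: "nat list \<Rightarrow> nat \<Rightarrow> nat" where
  "conj_part lam k = card {i. 1 \<le> i \<and> k \<le> part lam i}"

definition Xfun :: "nat list \<Rightarrow> nat list \<Rightarrow> 'a::field \<Rightarrow> 'a" where
  "Xfun lam mu x =
     (\<Prod>(i, j)\<in>diagram mu. of_int (int j - int i) - x) *
     (\<Prod>(i, j)\<in>diagram lam.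
        (of_int (int j - int i - int (part mu 1)) + x) *
        (\<Prod>k\<in>{1..part mu 1}.
           (of_int (int j - int i + int (conj_part mu k) - int k + 1) + x) /
           (of_int (int j - int i + int (conj_part mu k) - int k) + x)))"

text \<open>The indeterminate x, as an element of the field of rational functions Q(x).\<close>
definition indet :: "rat poly fract" where
  "indet = Fract [:0, 1:] 1"

end

theory Submission
  imports Defs
begin

text \<open>
  Write \<open>c(q) = j - i\<close> for the content of a cell \<open>q = (i, j)\<close> and
  \<open>G(z) = (z + 1)(z - 1)/z\<^sup>2\<close>. Cutting \<open>[\<mu>]\<close> into columns, the product of
  \<open>G(c(q) - c - x)\<close> over one column telescopes, and so does the remaining product over
  the columns; this turns the factor of \<open>X\<close> attached to a cell of \<open>[\<lambda>]\<close> of content \<open>c\<close>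
  into \<open>c + x\<close> times the product of \<open>G(c(q) - c - x)\<close> over \<open>q \<in> [\<mu>]\<close>. Hence
  \<open>X\<^sub>\<lambda>\<^sub>\<mu>(x)\<close> is the product of \<open>c(q) - x\<close> over \<open>[\<mu>]\<close>, of \<open>c(p) + x\<close> over \<open>[\<lambda>]\<close>
  and of \<open>G(c(q) - c(p) - x)\<close> over \<open>[\<lambda>] \<times> [\<mu>]\<close>, which is invariant under exchanging
  \<open>\<lambda>\<close> with \<open>\<mu>\<close> and negating \<open>x\<close> because \<open>G\<close> is even. The argument works in any field
  for \<open>x \<notin> \<int>\<close>, where no denominator vanishes.
\<close>

lemma part_antimono:
  assumes "is_partition mu" "1 \<le> i" "i \<le> i'"
  shows "part mu i' \<le> part mu i"
proof (cases "i' \<le> length mu \<and> i < i'")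
  case True
  then have "i - 1 < i' - 1" "i' - 1 < length mu" using assms(2) by auto
  then have "mu ! (i' - 1) \<le> mu ! (i - 1)"
    using assms(1) unfolding is_partition_def sorted_wrt_iff_nth_less by blast
  then show ?thesis using True assms by (simp add: part_def)
next
  case False
  then show ?thesis using assms by (auto simp: part_def)
qed

lemma conj_part_interval:
  assumes "is_partition mu" "1 \<le> j"
  shows "{i. 1 \<le> i \<and> j \<le> part mu i} = {1..conj_part mu j}"
proof -
  let ?S = "{i. 1 \<le> i \<and> j \<le> part mu i}"
  have "?S \<subseteq> {1..length mu}"
    using assms(2) by (auto simp: part_def split: if_splits)
  then have "finite ?S" by (rule finite_subset) simp
  have "?S \<subseteq> {1..card ?S}"
  proof
    fix i assume "i \<in> ?S"
    then have "{1..i} \<subseteq> ?S"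
      using part_antimono[OF assms(1)] by (fastforce intro: order_trans)
    then have "card {1..i} \<le> card ?S" using \<open>finite ?S\<close> by (rule card_mono[rotated])
    with \<open>i \<in> ?S\<close> show "i \<in> {1..card ?S}" by simp
  qed
  then have "?S = {1..card ?S}" by (intro card_subset_eq) auto
  then show ?thesis by (simp add: conj_part_def)
qed

lemma diagram_by_columns:
  assumes "is_partition mu"
  shows "diagram mu = (\<lambda>(j, i). (i, j)) ` (SIGMA j:{1..part mu 1}. {1..conj_part mu j})"
proof -
  have "(i, j) \<in> diagram mu \<longleftrightarrow> j \<in> {1..part mu 1} \<and> i \<in> {1..conj_part mu j}" for i j
  proof (cases "1 \<le> i \<and> 1 \<le> j")
    case True
    then have "part mu i \<le> part mu 1" using part_antimono[OF assms, of 1 i] by simp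
    moreover have "i \<in> {i. 1 \<le> i \<and> j \<le> part mu i} \<longleftrightarrow> i \<in> {1..conj_part mu j}"
      using conj_part_interval[OF assms, of j] True by simp
    ultimately show ?thesis using True by (auto simp: diagram_def)
  next
    case False
    then show ?thesis by (auto simp: diagram_def)
  qed
  then show ?thesis by (auto simp: image_iff)
qed

lemma prod_diagram_by_columns:
  assumes "is_partition mu"
  shows "(\<Prod>q\<in>diagram mu. f q) = (\<Prod>j\<in>{1..part mu 1}. \<Prod>i\<in>{1..conj_part mu j}. f (i, j))"
proof -
  have "inj_on (\<lambda>(j, i). (i, j)) (SIGMA j:{1..part mu 1}. {1..conj_part mu j})"
    by (auto simp: inj_on_def)
  then show ?thesis
    unfolding diagram_by_columns[OF assms] prod.reindex[OF \<open>inj_on _ _\<close>]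
    by (subst prod.Sigma) (auto simp: case_prod_beta' comp_def)
qed

definition cell_content :: "nat \<times> nat \<Rightarrow> int" where
  "cell_content q = int (snd q) - int (fst q)"

definition cross_factor :: "'a::field \<Rightarrow> 'a" where
  "cross_factor z = (z + 1) * (z - 1) / (z * z)"

lemma cross_factor_minus [simp]: "cross_factor (- z) = cross_factor z"
proof -
  have "(- z + 1) * (- z - 1) = (z + 1) * (z - 1)" by (simp add: algebra_simps)
  then show ?thesis by (simp add: cross_factor_def)
qed

lemma of_int_add_nonzero_if_notin_Ints:
  assumes "x \<notin> \<int>"
  shows "of_int n + x \<noteq> 0"
proof
  assume "of_int n + x = 0"
  then have "x = of_int (- n)" by (simp add: eq_neg_iff_add_eq_0 add.commute)
  with assms show False by simp
qed

lemma prod_cross_factor_column: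
  fixes a :: "'a::field"
  assumes "a \<notin> \<int>"
  shows "(\<Prod>i=1..n. cross_factor (a - of_nat i)) = a / (a - 1) * ((a - of_nat n - 1) / (a - of_nat n))"
proof -
  have nz: "a - of_nat i \<noteq> 0" "a - of_nat i - 1 \<noteq> 0" for i :: nat
    using of_int_add_nonzero_if_notin_Ints[OF assms, of "- int i"]
      of_int_add_nonzero_if_notin_Ints[OF assms, of "- int i - 1"]
    by (simp_all add: algebra_simps)
  have step: "cross_factor (a - of_nat i)
      = inverse (a - of_nat i) / inverse (a - of_nat (i - 1)) *
        ((a - of_nat i - 1) / (a - of_nat (i - 1) - 1))" if "1 \<le> i" for i
  proof -
    have "a - of_nat (i - 1) = a - of_nat i + 1" using that by (simp add: of_nat_diff)
    then show ?thesis using nz(1)[of i] by (simp add: cross_factor_def field_simps)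
  qed
  have "(\<Prod>i=1..n. cross_factor (a - of_nat i))
      = (\<Prod>i=Suc 0..n. inverse (a - of_nat i) / inverse (a - of_nat (i - 1)) *
          ((a - of_nat i - 1) / (a - of_nat (i - 1) - 1)))"
    by (intro prod.cong) (simp_all add: step)
  also have "\<dots> = (\<Prod>i=Suc 0..n. inverse (a - of_nat i) / inverse (a - of_nat (i - 1))) *
      (\<Prod>i=Suc 0..n. (a - of_nat i - 1) / (a - of_nat (i - 1) - 1))"
    by (rule prod.distrib)
  also have "\<dots> = inverse (a - of_nat n) / inverse (a - of_nat 0) *
      ((a - of_nat n - 1) / (a - of_nat 0 - 1))"
    by (intro arg_cong2[where f = "(*)"] prod_telescope'')
      (simp_all only: nz inverse_nonzero_iff_nonzero not_False_eq_True zero_le)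
  also have "\<dots> = a / (a - 1) * ((a - of_nat n - 1) / (a - of_nat n))"
    by (simp add: divide_inverse ac_simps)
  finally show ?thesis .
qed

lemma cell_factor_eq_prod_cross_factor:
  fixes x :: "'a::field"
  assumes mu: "is_partition mu" and x: "x \<notin> \<int>"
  shows "(of_int (c - int (part mu 1)) + x) *
      (\<Prod>k\<in>{1..part mu 1}. (of_int (c + int (conj_part mu k) - int k + 1) + x) /
                             (of_int (c + int (conj_part mu k) - int k) + x))
    = (of_int c + x) * (\<Prod>q\<in>diagram mu. cross_factor (of_int (cell_content q - c) - x))"
proof -
  define y where "y = of_int c + x"
  define m where "m = part mu 1"
  define Q where "Q k = (of_int (c + int (conj_part mu k) - int k + 1) + x) /
                        (of_int (c + int (conj_part mu k) - int k) + x)" for k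
  have y: "of_nat j - y \<notin> \<int>" for j :: nat
  proof
    assume "of_nat j - y \<in> \<int>"
    then have "of_int (int j - c) - (of_nat j - y) \<in> \<int>" by simp
    then show False using x by (simp add: y_def)
  qed
  have column: "(\<Prod>i=1..conj_part mu j. cross_factor (of_int (cell_content (i, j) - c) - x))
      = (of_nat j - y) / (of_nat j - y - 1) * Q j" for j
  proof -
    let ?a = "of_nat j - y" and ?n = "conj_part mu j"
    have "(\<Prod>i=1..?n. cross_factor (of_int (cell_content (i, j) - c) - x))
        = (\<Prod>i=1..?n. cross_factor (?a - of_nat i))"
      by (simp add: cell_content_def y_def algebra_simps)
    also have "\<dots> = ?a / (?a - 1) * ((?a - of_nat ?n - 1) / (?a - of_nat ?n))"
      by (rule prod_cross_factor_column[OF y])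
    also have "(?a - of_nat ?n - 1) / (?a - of_nat ?n) = Q j"
    proof -
      have num: "?a - of_nat ?n - 1 = - (of_int (c + int ?n - int j + 1) + x)"
        and den: "?a - of_nat ?n = - (of_int (c + int ?n - int j) + x)"
        by (simp_all add: y_def algebra_simps)
      show ?thesis unfolding Q_def by (subst num, subst den) (rule minus_divide_divide)
    qed
    finally show ?thesis .
  qed
  have telescope: "(\<Prod>j=1..m. (of_nat j - y) / (of_nat j - y - 1)) = (of_nat m - y) / (- y)"
  proof -
    have "(\<Prod>j=1..m. (of_nat j - y) / (of_nat j - y - 1))
        = (\<Prod>j=Suc 0..m. (of_nat j - y) / (of_nat (j - 1) - y))"
      by (intro prod.cong) (auto simp: of_nat_diff algebra_simps)
    also have "\<dots> = (of_nat m - y) / (of_nat 0 - y)"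
      by (rule prod_telescope'') (use y in \<open>auto simp: diff_eq_eq\<close>)
    finally show ?thesis by simp
  qed
  have "y \<noteq> 0" using y[of 0] by auto
  have "(\<Prod>q\<in>diagram mu. cross_factor (of_int (cell_content q - c) - x))
      = (\<Prod>j=1..m. (of_nat j - y) / (of_nat j - y - 1) * Q j)"
    by (simp only: prod_diagram_by_columns[OF mu] column m_def)
  also have "\<dots> = (of_nat m - y) / (- y) * (\<Prod>j=1..m. Q j)"
    by (simp only: prod.distrib telescope)
  finally have "y * (\<Prod>q\<in>diagram mu. cross_factor (of_int (cell_content q - c) - x))
      = (y - of_nat m) * (\<Prod>j=1..m. Q j)"
    using \<open>y \<noteq> 0\<close> by (simp add: field_simps)
  then show ?thesis by (simp add: y_def m_def Q_def algebra_simps)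
qed

lemma Xfun_eq_prod_cross_factor:
  fixes x :: "'a::field"
  assumes "is_partition mu" "x \<notin> \<int>"
  shows "Xfun lam mu x =
      (\<Prod>q\<in>diagram mu. of_int (cell_content q) - x) *
      (\<Prod>p\<in>diagram lam. of_int (cell_content p) + x) *
      (\<Prod>p\<in>diagram lam. \<Prod>q\<in>diagram mu. cross_factor (of_int (cell_content q - cell_content p) - x))"
proof -
  have "Xfun lam mu x =
      (\<Prod>q\<in>diagram mu. of_int (cell_content q) - x) *
      (\<Prod>p\<in>diagram lam. (of_int (cell_content p) + x) *
        (\<Prod>q\<in>diagram mu. cross_factor (of_int (cell_content q - cell_content p) - x)))"
    unfolding Xfun_def case_prod_beta cell_factor_eq_prod_cross_factor[OF assms]
    by (simp only: cell_content_def)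
  then show ?thesis by (simp only: prod.distrib mult.assoc)
qed

lemma Xfun_swap:
  fixes x :: "'a::field"
  assumes "is_partition lam" "is_partition mu" "x \<notin> \<int>"
  shows "Xfun lam mu x = Xfun mu lam (- x)"
proof -
  have "- x \<notin> \<int>" using assms(3) by simp
  have "cross_factor (of_int (cell_content q - cell_content p) - x)
      = cross_factor (of_int (cell_content p - cell_content q) - - x)" for p q
  proof -
    have "of_int (cell_content p - cell_content q) - - x
        = - (of_int (cell_content q - cell_content p) - x)"
      by (simp add: algebra_simps)
    then show ?thesis by (simp only: cross_factor_minus)
  qed
  then have "(\<Prod>p\<in>diagram lam. \<Prod>q\<in>diagram mu. cross_factor (of_int (cell_content q - cell_content p) - x))
      = (\<Prod>q\<in>diagram mu. \<Prod>p\<in>diagram lam. cross_factor (of_int (cell_content p - cell_content q) - - x))"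
    by (subst prod.swap) simp
  then show ?thesis
    unfolding Xfun_eq_prod_cross_factor[OF assms(2,3)] Xfun_eq_prod_cross_factor[OF assms(1) \<open>- x \<notin> \<int>\<close>]
    by (simp only: diff_minus_eq_add add_uminus_conv_diff mult_ac)
qed

lemma of_int_fract: "(of_int n :: 'a::idom fract) = Fract (of_int n) 1"
  by (cases n rule: int_cases2) (simp_all add: of_nat_fract)

lemma indet_notin_Ints: "indet \<notin> \<int>"
proof
  assume "indet \<in> \<int>"
  then obtain n where "Fract [:0, 1:] 1 = Fract (of_int n :: rat poly) 1"
    by (auto simp: indet_def of_int_fract elim!: Ints_cases)
  then have "[:0, 1:] = (of_int n :: rat poly)" by (simp add: eq_fract)
  then show False by (simp add: of_int_poly)
qed

theorem corollary3p3:
  assumes "is_partition lam" and "is_partition mu"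
  shows "Xfun lam mu indet = Xfun mu lam (- indet)"
  using assms indet_notin_Ints by (rule Xfun_swap)

end
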